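(* Let $k\ge 2$, let $d:\chi^2\to[0,\infty)$ be a metric on a set $\chi$, and define $d_{\mathrm{HC}}:\chi^k\to[0,\infty)$ by $$d_{\mathrm{HC}}(p_1,\ldots,p_k)=\min_{\pi}\sum_{i=1}^{k} d\big(p_{\pi(i)},p_{\pi(i+1)}\big),$$ where the minimum is over all permutations $\pi$ of $\{1,\ldots,k\}$ and $\pi(k+1):=\pi(1)$ (i.e. the minimum cost of a Hamiltonian circuit through $p_1,\ldots,p_k$). Then $d_{\mathrm{HC}}$ is an $H$-metric with parameter $\gamma=1$.
   Context: For a multiset $S$ of elements of $\chi$, $elem(S)$ denotes the set of distinct elements of $S$. An $H$-metric with parameter $\gamma$ (where $\gamma$ is an integer with $1\le\gamma\le k-1$) is a function $d_H:\chi^k\to[0,\infty)$ satisfying: ($\Pi$) $d_H(p_1,\ldots,p_k)$ is invariant under permuting its arguments; ($O_D$) $d_H(p_1,\ldots,p_k)\ge 0$, with equality if and only if $p_1=\cdots=p_k$; ($\Delta_H$) for all $p_1,\ldots,p_k,a\in\chi$ and all $i\in\{1,\ldots,k\}$, $d_H(p_1,\ldots,p_k)\le d_H(p_1,\ldots,p_i,a,\ldots,a)+d_H(a,\ldots,a,p_{i+1},\ldots,p_k)$, where $a$ appears $k-i$ times in the first term and $i$ times in the second; ($\mathcal S_H$) for all $p_1,\ldots,p_k,p'_1,\ldots,p'_k\in\chi$: if $elem(\{p_1,\ldots,p_k\})\subsetneq elem(\{p'_1,\ldots,p'_k\})$ then $d_H(p_1,\ldots,p_k)\le d_H(p'_1,\ldots,p'_k)$,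 and if $elem(\{p_1,\ldots,p_k\})= elem(\{p'_1,\ldots,p'_k\})$ then $d_H(p_1,\ldots,p_k)\le \gamma\, d_H(p'_1,\ldots,p'_k)$. *)

theory Defs
  imports Complex_Main "HOL-Library.Multiset" "HOL-Combinatorics.Permutations"
begin

text \<open>Points of chi^k are represented as lists of length k over the type 'a (the set chi).
  Index i of the paper corresponds to list position i-1.\<close>

definition is_metric :: "('a \<Rightarrow> 'a \<Rightarrow> real) \<Rightarrow> bool" where
  "is_metric d \<longleftrightarrow>
     (\<forall>x y. d x y \<ge> 0) \<and> (\<forall>x y. d x y = 0 \<longleftrightarrow> x = y) \<and>
     (\<forall>x y. d x y = d y x) \<and> (\<forall>x y z. d x z \<le> d x y + d y z)"

definition H_metric :: "nat \<Rightarrow> nat \<Rightarrow> ('a list \<Rightarrow> real) \<Rightarrow> bool" where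
  "H_metric k \<gamma> dH \<longleftrightarrow>
     1 \<le> \<gamma> \<and> \<gamma> \<le> k - 1 \<and>
     \<comment> \<open>(Pi) permutation invariance\<close>
     (\<forall>ps qs. length ps = k \<longrightarrow> mset qs = mset ps \<longrightarrow> dH ps = dH qs) \<and>
     \<comment> \<open>(O_D) nonnegativity and zero exactly on constant tuples\<close>
     (\<forall>ps. length ps = k \<longrightarrow>
        dH ps \<ge> 0 \<and> (dH ps = 0 \<longleftrightarrow> (\<forall>x\<in>set ps. \<forall>y\<in>set ps. x = y))) \<and>
     \<comment> \<open>(Delta_H) H-triangle inequality\<close>
     (\<forall>ps a i. length ps = k \<longrightarrow> 1 \<le> i \<longrightarrow> i \<le> k \<longrightarrow>
        dH ps \<le> dH (take i ps @ replicate (k - i) a) + dH (replicate i a @ drop i ps)) \<and>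
     \<comment> \<open>(S_H) monotonicity\<close>
     (\<forall>ps qs. length ps = k \<longrightarrow> length qs = k \<longrightarrow>
        (set ps \<subset> set qs \<longrightarrow> dH ps \<le> dH qs) \<and>
        (set ps = set qs \<longrightarrow> dH ps \<le> real \<gamma> * dH qs))"

definition dHC :: "('a \<Rightarrow> 'a \<Rightarrow> real) \<Rightarrow> nat \<Rightarrow> 'a list \<Rightarrow> real" where
  "dHC d k ps = Min {(\<Sum>i<k. d (ps ! \<pi> i) (ps ! \<pi> ((i + 1) mod k))) | \<pi>. \<pi> permutes {..<k}}"

end

theory Submission
  imports Defs
begin

text \<open>
  The circuit cost of a tuple depends only on its multiset of points: it is the cheapest closed
  tour through any arrangement of that multiset. By the triangle inequality, deleting a point
  from a closed tour never increases its cost, while repeating a point right after itself costs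
  nothing. Deleting points shows that a sub-multiset has a cheaper optimal tour; adding copies of
  points already present shows that the optimal cost only depends monotonically on the set of
  points, which is \<open>(S_H)\<close> with \<open>\<gamma> = 1\<close>. For \<open>(\<Delta>_H)\<close>, the two tuples on the right
  share the point \<open>a\<close>, so their optimal tours splice at \<open>a\<close> into one closed tour through the
  union of both multisets, of which the tuple on the left is a sub-multiset.
\<close>

lemma is_metricD:
  assumes "is_metric d"
  shows "d x y \<ge> 0" and "d x y = 0 \<longleftrightarrow> x = y" and "d x z \<le> d x y + d y z"
  using assms unfolding is_metric_def by blast+

fun walk_cost :: "('a \<Rightarrow> 'a \<Rightarrow> real) \<Rightarrow> 'a list \<Rightarrow> real" where
  "walk_cost d [] = 0"
| "walk_cost d [x] = 0"
| "walk_cost d (x # y # xs) = d x y + walk_cost d (y # xs)"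

definition tour_cost :: "('a \<Rightarrow> 'a \<Rightarrow> real) \<Rightarrow> 'a list \<Rightarrow> real" where
  "tour_cost d xs = (case xs of [] \<Rightarrow> 0 | x # _ \<Rightarrow> walk_cost d (xs @ [x]))"

definition min_tour :: "('a \<Rightarrow> 'a \<Rightarrow> real) \<Rightarrow> 'a multiset \<Rightarrow> real" where
  "min_tour d M = Min (tour_cost d ` {xs. mset xs = M})"

lemma walk_cost_append: "walk_cost d (xs @ y # ys) = walk_cost d (xs @ [y]) + walk_cost d (y # ys)"
  by (induction xs rule: induct_list012) auto

lemma walk_cost_snoc: "xs \<noteq> [] \<Longrightarrow> walk_cost d (xs @ [y]) = walk_cost d xs + d (last xs) y"
  by (induction xs rule: induct_list012) auto

lemma walk_cost_conv_sum: "walk_cost d xs = (\<Sum>i < length xs - 1. d (xs ! i) (xs ! Suc i))"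
  by (induction d xs rule: walk_cost.induct) (simp_all add: sum.lessThan_Suc_shift del: sum.lessThan_Suc)

lemma walk_cost_nonneg: "is_metric d \<Longrightarrow> walk_cost d xs \<ge> 0"
  by (induction d xs rule: walk_cost.induct) (auto intro: add_nonneg_nonneg is_metricD(1))

lemma walk_cost_eq_0_iff:
  assumes "is_metric d"
  shows "walk_cost d (x # xs) = 0 \<longleftrightarrow> (\<forall>y\<in>set xs. y = x)"
proof (induction xs arbitrary: x)
  case (Cons y xs)
  have "walk_cost d (x # y # xs) = 0 \<longleftrightarrow> d x y = 0 \<and> walk_cost d (y # xs) = 0"
    using is_metricD(1)[OF assms, of x y] walk_cost_nonneg[OF assms, of "y # xs"] by auto
  with Cons.IH show ?case
    using is_metricD(2)[OF assms] by auto
qed simp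

lemma tour_cost_nonneg: "is_metric d \<Longrightarrow> tour_cost d xs \<ge> 0"
  by (auto simp: tour_cost_def walk_cost_nonneg split: list.split)

lemma tour_cost_eq_0_iff:
  assumes "is_metric d"
  shows "tour_cost d xs = 0 \<longleftrightarrow> (\<forall>x\<in>set xs. \<forall>y\<in>set xs. x = y)"
proof (cases xs)
  case (Cons x xs')
  then show ?thesis
    using walk_cost_eq_0_iff[OF assms, of x "xs' @ [x]"] by (auto simp: tour_cost_def)
qed (simp add: tour_cost_def)

lemma tour_cost_conv_sum:
  assumes "xs \<noteq> []"
  shows "tour_cost d xs = (\<Sum>i < length xs. d (xs ! i) (xs ! ((i + 1) mod length xs)))"
proof -
  obtain x xs' where xs: "xs = x # xs'"
    using assms by (cases xs) auto
  have "tour_cost d xs = (\<Sum>i < length xs. d ((xs @ [x]) ! i) ((xs @ [x]) ! Suc i))"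
    by (simp add: tour_cost_def xs walk_cost_conv_sum)
  also have "\<dots> = (\<Sum>i < length xs. d (xs ! i) (xs ! ((i + 1) mod length xs)))"
  proof (rule sum.cong)
    fix i assume "i \<in> {..<length xs}"
    then have i: "i < length xs" by simp
    have "(xs @ [x]) ! Suc i = xs ! ((i + 1) mod length xs)"
    proof (cases "Suc i < length xs")
      case False
      with i have "Suc i = length xs" by simp
      then show ?thesis by (simp add: nth_append xs)
    qed (simp add: nth_append)
    with i show "d ((xs @ [x]) ! i) ((xs @ [x]) ! Suc i) = d (xs ! i) (xs ! ((i + 1) mod length xs))"
      by (simp add: nth_append)
  qed simp
  finally show ?thesis .
qed

lemma tour_cost_rotate: "tour_cost d (xs @ ys) = tour_cost d (ys @ xs)"
proof (cases "xs = [] \<or> ys = []")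
  case False
  then obtain x xs' y ys' where "xs = x # xs'" "ys = y # ys'"
    by (meson list.exhaust)
  then show ?thesis
    using walk_cost_append[of d "x # xs'" y "ys' @ [x]"] walk_cost_append[of d "y # ys'" x "xs' @ [y]"]
    by (simp add: tour_cost_def)
qed auto

lemma tour_cost_rotate_to_front:
  assumes "a \<in> set xs"
  obtains ys where "mset (a # ys) = mset xs" and "tour_cost d (a # ys) = tour_cost d xs"
proof -
  obtain u v where "xs = u @ a # v"
    using assms by (meson split_list)
  then show ?thesis
    using that[of "v @ u"] tour_cost_rotate[of d u "a # v"] by auto
qed

lemma tour_cost_splice: "tour_cost d (a # u @ a # v) = tour_cost d (a # u) + tour_cost d (a # v)"
  using walk_cost_append[of d "a # u" a "v @ [a]"] by (simp add: tour_cost_def)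

lemma tour_cost_stutter:
  assumes "is_metric d"
  shows "tour_cost d (u @ y # y # v) = tour_cost d (u @ y # v)"
proof -
  have "tour_cost d (y # y # v @ u) = tour_cost d (y # v @ u)"
    using is_metricD(2)[OF assms] by (simp add: tour_cost_def)
  then show ?thesis
    using tour_cost_rotate[of d u "y # y # v"] tour_cost_rotate[of d u "y # v"] by simp
qed

lemma tour_cost_delete_le:
  assumes "is_metric d"
  shows "tour_cost d (u @ v) \<le> tour_cost d (u @ x # v)"
proof -
  have "tour_cost d ys \<le> tour_cost d (x # ys)" for ys
  proof (cases ys)
    case (Cons y ys')
    have "d (last ys) y \<le> d (last ys) x + d x y"
      by (rule is_metricD(3)[OF assms])
    then show ?thesis
      using Cons walk_cost_snoc[of ys d y] walk_cost_snoc[of ys d x] by (simp add: tour_cost_def)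
  qed (use is_metricD(1)[OF assms] in \<open>simp add: tour_cost_def\<close>)
  then show ?thesis
    using tour_cost_rotate[of d u v] tour_cost_rotate[of d u "x # v"] by (metis append_Cons)
qed

lemma finite_lists_with_mset: "finite {xs. mset xs = M}"
proof (rule finite_subset)
  show "{xs. mset xs = M} \<subseteq> {xs. set xs \<subseteq> set_mset M \<and> length xs = size M}"
    by auto
qed (simp add: finite_lists_length_eq)

lemma min_tour_le: "mset xs = M \<Longrightarrow> min_tour d M \<le> tour_cost d xs"
  unfolding min_tour_def by (rule Min_le) (auto intro: finite_lists_with_mset)

lemma min_tour_attained:
  obtains xs where "mset xs = M" and "tour_cost d xs = min_tour d M"
proof -
  have "{xs. mset xs = M} \<noteq> {}"
    using ex_mset by auto
  then have "min_tour d M \<in> tour_cost d ` {xs. mset xs = M}"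
    unfolding min_tour_def by (intro Min_in) (auto intro: finite_lists_with_mset)
  with that show ?thesis by auto
qed

lemma min_tour_nonneg: "is_metric d \<Longrightarrow> min_tour d M \<ge> 0"
  by (metis min_tour_attained tour_cost_nonneg)

lemma min_tour_eq_0_iff:
  assumes "is_metric d"
  shows "min_tour d M = 0 \<longleftrightarrow> (\<forall>x\<in>#M. \<forall>y\<in>#M. x = y)"
proof -
  obtain xs where xs: "mset xs = M" "tour_cost d xs = min_tour d M"
    by (rule min_tour_attained)
  from xs(1) have "tour_cost d xs = 0 \<longleftrightarrow> (\<forall>x\<in>#M. \<forall>y\<in>#M. x = y)"
    using tour_cost_eq_0_iff[OF assms] by auto
  with xs(2) show ?thesis by simp
qed

lemma min_tour_le_supset:
  assumes "is_metric d" and "M \<subseteq># mset zs"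
  shows "min_tour d M \<le> tour_cost d zs"
  using assms(2)
proof (induction "length zs" arbitrary: zs rule: less_induct)
  case less
  show ?case
  proof (cases "M = mset zs")
    case False
    with less.prems obtain z where z: "z \<in># mset zs - M"
      by (metis Diff_eq_empty_iff_mset multiset_nonemptyE subset_mset.order_antisym)
    have "z \<in> set zs"
      using in_diffD[OF z] by simp
    then obtain u v where zs: "zs = u @ z # v"
      by (meson split_list)
    have "M \<subseteq># mset zs - {#z#}"
      using less.prems z by (metis mset_subset_eq_single subset_mset.diff_add subset_mset.le_add_diff)
    then have "min_tour d M \<le> tour_cost d (u @ v)"
      using less.hyps[of "u @ v"] zs by simp
    then show ?thesis
      using tour_cost_delete_le[OF assms(1), of u v z] zs by simp
  qed (simp add: min_tour_le)
qed

lemma tour_cost_add_copies: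
  assumes "is_metric d" and "set_mset M \<subseteq> set xs"
  obtains zs where "mset zs = mset xs + M" and "tour_cost d zs = tour_cost d xs"
  using assms(2)
proof (induction M arbitrary: thesis)
  case (add y M)
  then obtain zs where zs: "mset zs = mset xs + M" "tour_cost d zs = tour_cost d xs"
    by auto
  have "y \<in> set zs"
    using add.prems(2) arg_cong[OF zs(1), of set_mset] by auto
  then obtain u v where "zs = u @ y # v"
    by (meson split_list)
  then show ?case
    using add.prems(1)[of "u @ y # y # v"] zs tour_cost_stutter[OF assms(1), of u y v] by simp
qed simp

lemma min_tour_mono_set:
  assumes "is_metric d" and "set_mset M \<subseteq> set_mset N"
  shows "min_tour d M \<le> min_tour d N"
proof -
  obtain xs where xs: "mset xs = N" "tour_cost d xs = min_tour d N"
    by (rule min_tour_attained)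
  obtain zs where zs: "mset zs = mset xs + M" "tour_cost d zs = tour_cost d xs"
    by (rule tour_cost_add_copies[OF assms(1), of M xs]) (use assms(2) xs(1) in auto)
  have "min_tour d M \<le> tour_cost d zs"
    using min_tour_le_supset[OF assms(1)] zs(1) by simp
  with xs zs show ?thesis by simp
qed

lemma min_tour_subadditive:
  assumes "is_metric d" and "a \<in># A" "a \<in># B" and "M \<subseteq># A + B"
  shows "min_tour d M \<le> min_tour d A + min_tour d B"
proof -
  obtain xs where xs: "mset xs = A" "tour_cost d xs = min_tour d A"
    by (rule min_tour_attained)
  obtain ys where ys: "mset ys = B" "tour_cost d ys = min_tour d B"
    by (rule min_tour_attained)
  obtain xs' where xs': "mset (a # xs') = A" "tour_cost d (a # xs') = min_tour d A"
    by (rule tour_cost_rotate_to_front[of a xs d]) (use assms(2) xs in auto)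
  obtain ys' where ys': "mset (a # ys') = B" "tour_cost d (a # ys') = min_tour d B"
    by (rule tour_cost_rotate_to_front[of a ys d]) (use assms(3) ys in auto)
  have "min_tour d M \<le> tour_cost d (a # xs' @ a # ys')"
    using min_tour_le_supset[OF assms(1)] assms(4) xs'(1) ys'(1) by (metis mset_append append_Cons)
  also have "\<dots> = min_tour d A + min_tour d B"
    using tour_cost_splice[of d a xs' ys'] xs'(2) ys'(2) by simp
  finally show ?thesis .
qed

lemma min_tour_take_drop_le:
  assumes "is_metric d" and "1 \<le> i" "i \<le> length ps"
  shows "min_tour d (mset ps) \<le> min_tour d (mset (take i ps @ replicate (length ps - i) a))
                                 + min_tour d (mset (replicate i a @ drop i ps))"
proof (cases "i = length ps")
  case True
  then show ?thesis
    using min_tour_nonneg[OF assms(1)] by simp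
next
  case False
  have "mset ps = mset (take i ps) + mset (drop i ps)"
    by (metis append_take_drop_id mset_append)
  then have "mset ps \<subseteq># mset (take i ps @ replicate (length ps - i) a)
                       + mset (replicate i a @ drop i ps)"
    by (simp add: subset_mset.add_mono)
  then show ?thesis
    using assms False by (intro min_tour_subadditive) auto
qed

lemma lists_with_mset_conv_permute_list:
  "{xs. mset xs = mset ps} = (\<lambda>\<pi>. permute_list \<pi> ps) ` {\<pi>. \<pi> permutes {..<length ps}}"
  by (auto elim: mset_eq_permutation)

lemma tour_cost_permute_list:
  assumes "\<pi> permutes {..<length ps}" and "ps \<noteq> []"
  shows "tour_cost d (permute_list \<pi> ps)
           = (\<Sum>i < length ps. d (ps ! \<pi> i) (ps ! \<pi> ((i + 1) mod length ps)))"
proof -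
  have "tour_cost d (permute_list \<pi> ps) = (\<Sum>i < length ps.
          d (permute_list \<pi> ps ! i) (permute_list \<pi> ps ! ((i + 1) mod length ps)))"
    using assms(2) tour_cost_conv_sum[of "permute_list \<pi> ps" d]
    by (metis length_0_conv length_permute_list)
  also have "\<dots> = (\<Sum>i < length ps. d (ps ! \<pi> i) (ps ! \<pi> ((i + 1) mod length ps)))"
  proof (rule sum.cong)
    fix i assume "i \<in> {..<length ps}"
    moreover have "(i + 1) mod length ps < length ps"
      using assms(2) by simp
    ultimately show "d (permute_list \<pi> ps ! i) (permute_list \<pi> ps ! ((i + 1) mod length ps))
                     = d (ps ! \<pi> i) (ps ! \<pi> ((i + 1) mod length ps))"
      using permute_list_nth[OF assms(1)] by simp
  qed simp
  finally show ?thesis .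
qed

lemma dHC_eq_min_tour:
  assumes "ps \<noteq> []"
  shows "dHC d (length ps) ps = min_tour d (mset ps)"
proof -
  have "{(\<Sum>i < length ps. d (ps ! \<pi> i) (ps ! \<pi> ((i + 1) mod length ps))) | \<pi>. \<pi> permutes {..<length ps}}
          = (\<lambda>\<pi>. tour_cost d (permute_list \<pi> ps)) ` {\<pi>. \<pi> permutes {..<length ps}}"
    using tour_cost_permute_list[OF _ assms] by auto
  then show ?thesis
    by (simp add: dHC_def min_tour_def lists_with_mset_conv_permute_list image_image)
qed

theorem proposition2:
  fixes d :: "'a \<Rightarrow> 'a \<Rightarrow> real" and k :: nat
  assumes "k \<ge> 2" and "is_metric d"
  shows "H_metric k 1 (dHC d k)"
proof -
  have dHC: "dHC d k ps = min_tour d (mset ps)" if "length ps = k" for ps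
  proof -
    have "ps \<noteq> []" using that assms(1) by auto
    then show ?thesis using dHC_eq_min_tour that by blast
  qed
  show ?thesis
    unfolding H_metric_def
  proof (intro conjI allI impI)
    fix ps qs :: "'a list"
    assume "length ps = k"
    then show "dHC d k ps \<ge> 0" and "dHC d k ps = 0 \<longleftrightarrow> (\<forall>x\<in>set ps. \<forall>y\<in>set ps. x = y)"
      using dHC min_tour_nonneg[OF assms(2)] min_tour_eq_0_iff[OF assms(2)] by auto
    assume "mset qs = mset ps"
    then show "dHC d k ps = dHC d k qs"
      using dHC \<open>length ps = k\<close> by (metis mset_eq_length)
  next
    fix ps qs :: "'a list"
    assume "length ps = k" "length qs = k"
    then show "set ps \<subset> set qs \<Longrightarrow> dHC d k ps \<le> dHC d k qs"
      and "set ps = set qs \<Longrightarrow> dHC d k ps \<le> real 1 * dHC d k qs"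
      using dHC min_tour_mono_set[OF assms(2), of "mset ps" "mset qs"] by auto
  next
    fix ps :: "'a list" and a i
    assume "length ps = k" "1 \<le> i" "i \<le> k"
    then show "dHC d k ps \<le> dHC d k (take i ps @ replicate (k - i) a) + dHC d k (replicate i a @ drop i ps)"
      using dHC min_tour_take_drop_le[OF assms(2), of i ps a] by simp
  qed (use assms(1) in auto)
qed

end
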